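(* Let $p,q$ be primes congruent to $1$ modulo $4$, let $r$ be a positive integer, and let $m=4+8c$ for a nonnegative integer $c$. If $2mp^r-m^2q^2>0$, then $2mp^r-m^2q^2$ is good.
   Context: A positive integer is called good if it is not of the form $4^\alpha(8\beta+7)$ for integers $\alpha,\beta\ge 0$. *)

theory Defs
  imports "HOL-Computational_Algebra.Primes"
begin

definition good :: "int \<Rightarrow> bool" where
  "good n \<longleftrightarrow> n > 0 \<and> \<not> (\<exists>a b :: nat. n = 4 ^ a * (8 * int b + 7))"

end

theory Submission
  imports Defs
begin

text \<open>With \<open>m = 4u\<close>, \<open>u\<close> odd, the number equals \<open>8 u (p^r - 2 u q^2)\<close>, and both factors are odd
  since \<open>p\<close> is odd. An integer \<open>8k\<close> with \<open>k\<close> odd is never \<open>4^a (8b+7)\<close>: for \<open>a = 0\<close> or \<open>a = 1\<close>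
  the parity or the residue mod 16 is wrong, and for \<open>a \<ge> 2\<close> it would be divisible by 16.\<close>

lemma eight_times_odd_neq_pow4_times_7_mod_8:
  fixes k :: int
  assumes "odd k"
  shows "8 * k \<noteq> 4 ^ a * (8 * int b + 7)"
proof
  assume eq: "8 * k = 4 ^ a * (8 * int b + 7)"
  consider "a = 0" | "a = 1" | a' where "a = Suc (Suc a')"
    by (metis One_nat_def not0_implies_Suc)
  then show False
  proof cases
    case 1
    with eq have "8 * k = 8 * int b + 7" by simp
    with assms show False by presburger
  next
    case 2
    with eq have "8 * k = 4 * (8 * int b + 7)" by simp
    with assms show False by presburger
  next
    case 3
    then have "(16::int) dvd 4 ^ a" by simp
    then have "16 dvd 8 * k" using eq by simp
    with assms show False by presburger
  qed
qed

lemma good_eight_times_odd: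
  fixes k :: int
  assumes "k > 0" and "odd k"
  shows "good (8 * k)"
  using assms eight_times_odd_neq_pow4_times_7_mod_8 unfolding good_def by auto

theorem mainTheorem5:
  fixes p q r c :: nat and m :: int
  assumes "prime p" and "prime q"
    and "p mod 4 = 1" and "q mod 4 = 1"
    and "r > 0"
    and "m = 4 + 8 * int c"
    and "2 * m * int p ^ r - m ^ 2 * int q ^ 2 > 0"
  shows "good (2 * m * int p ^ r - m ^ 2 * int q ^ 2)"
proof -
  define u :: int where "u = 1 + 2 * int c"
  define w :: int where "w = int p ^ r - 2 * u * int q ^ 2"
  have factored: "2 * m * int p ^ r - m ^ 2 * int q ^ 2 = 8 * (u * w)"
    using assms(6) unfolding u_def w_def by (simp add: algebra_simps power2_eq_square)
  have "odd (int p)" using assms(3) by presburger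
  then have "odd w" unfolding w_def by simp
  moreover have "odd u" unfolding u_def by simp
  ultimately have "odd (u * w)" by simp
  moreover have "u * w > 0" using assms(7) factored by simp
  ultimately show ?thesis using factored good_eight_times_odd by metis
qed

end
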